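(* Let $(X,\mathcal{M},O)$ be an empirical scenario, let $e=\{e_C\}_{C\in\mathcal{M}}$ be an empirical model on it, and let $e^\dagger$ be any WPS representation of $e$, with underlying weak probability space $(Y,\Sigma,\mu)$. Then: (1) if $e$ is strongly contextual, then $e^\dagger$ maximally violates subadditivity, i.e. there is a finite $V\subseteq\Sigma$ with $\bigcup V\in\Sigma$ and $\mathfrak{a}(V)=1$; (2) if $e$ is logically contextual, then $e^\dagger$ violates subadditivity, i.e. there is a finite $V\subseteq\Sigma$ with $\bigcup V\in\Sigma$ and $\mathfrak{a}(V)>0$; (3) if $e$ is probabilistically contextual, then every monotonic extension $(Y,\Sigma',\mu')$ of $(Y,\Sigma,\mu)$ violates additivity, i.e. there is a finite collection $V\subseteq\Sigma'$ of pairwise disjoint sets with $\bigcup V\in\Sigma'$ and $\mu'(\bigcup V)\neq\sum_{A\in V}\mu'(A)$.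
   Context: An empirical scenario is a triple $(X,\mathcal{M},O)$ where $X$ is a finite set (measurements), $\mathcal{M}$ is a family of subsets of $X$ (maximal contexts) covering $X$, none contained in another, and $O$ is a finite nonempty set (outcomes). A context is a subset of some maximal context; $\mathcal{M}'$ denotes the set of all contexts. For $U\subseteq X$ let $\mathcal{E}(U):=O^U$ (functions $U\to O$, called sections over $U$); for $U\subseteq U'$ and $s\in\mathcal{E}(U')$, $s|_U$ is the restriction; elements of $\mathcal{E}(X)$ are global sections. For $C\in\mathcal{M}$, a probability distribution $e_C$ on the finite set $\mathcal{E}(C)$, and $U\subseteq C$, the marginal $e_C|_U$ is the distribution on $\mathcal{E}(U)$ given by $e_C|_U(s)=\sum_{r\in\mathcal{E}(C),\,r|_U=s}e_C(r)$. An empirical model is a family $e=\{e_C\}_{C\in\mathcal{M}}$ of probability distributions $e_C$ on $\mathcal{E}(C)$ with $e_C|_{C\cap C'}=e_{C'}|_{C\cap C'}$ for all $C,C'\in\mathcal{M}$. A global section $s$ is consistent with the support of $e$ if $e_C(s|_C)>0$ for all $C\in\mathcal{M}$. $e$ is strongly contextual if no global section is consistent with the support of $e$; logically contextual if there exist $C\in\mathcal{M}$ and $t\in\mathcal{E}(C)$ with $e_C(t)>0$ such that no global section $s$ with $s|_C=t$ is consistent with the support of $e$; probabilistically contextual if there is no probability distribution $e_X$ on $\mathcal{E}(X)$ with $e_X|_C=e_C$ for all $C\in\mathcal{M}$. An event representation of $e$ is a set $Y$ together with an injective map $\bar E:\bigcup_{U\subseteq X}\mathcal{E}(U)\to P(Y)$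 such that for every nonempty $U\subseteq X$ and $s\in\mathcal{E}(U)$, $\bar E(s)=\bigcap_{x\in U}\bar E(s|_{\{x\}})\neq\emptyset$. For a nonempty context $U$, let $\Sigma_U$ be the Boolean algebra of subsets of $Y$ generated by $\{\bar E(s):s\in\mathcal{E}(\{x\}),x\in U\}$, and let $\Sigma=\bigcup_{U\in\mathcal{M}'}\Sigma_U$ (a collection of subsets of $Y$, not necessarily an algebra). A WPS representation of $e$ is such an event representation together with a function $\mu:\Sigma\to\mathbb{R}$ satisfying: (WC) for every context $U$, $\mu|_{\Sigma_U}$ is a (finitely additive) probability measure on $(Y,\Sigma_U)$; (EC) for every $C\in\mathcal{M}$, $U\subseteq C$, and $s\in\mathcal{E}(U)$, $\mu(\bar E(s))=e_C|_U(s)$; (ME) for every context $U$ and distinct $s,s'\in\mathcal{E}(U)$, $\mu(\bar E(s)\cap\bar E(s'))=0$. The triple $(Y,\Sigma,\mu)$ is its weak probability space. For a finite $V\subseteq\Sigma$ with $\bigcup V\in\Sigma$, the defect of subadditivity is $\mathfrak{a}(V):=\mu(\bigcup V)-\sum_{A\in V}\mu(A)$. An extension of $(Y,\Sigma,\mu)$ is a triple $(Y,\Sigma',\mu')$ where $\Sigma'\subseteq P(Y)$ contains the algebra generated by $\Sigma$ and $\mu':\Sigma'\to\mathbb{R}$ satisfies $\mu'|_\Sigma=\mu$; it is monotonic if $\mu'$ takes values in $[0,1]$ and $A\subseteq B$ implies $\mu'(A)\le\mu'(B)$. *)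

theory Defs
  imports Complex_Main
begin

definition sections :: "'o set \<Rightarrow> 'x set \<Rightarrow> ('x \<rightharpoonup> 'o) set" where
  "sections Os U = {s. dom s = U \<and> ran s \<subseteq> Os}"

definition empirical_scenario :: "'x set \<Rightarrow> 'x set set \<Rightarrow> 'o set \<Rightarrow> bool" where
  "empirical_scenario X M Os \<longleftrightarrow>
     finite X \<and> (\<forall>C\<in>M. C \<subseteq> X) \<and> \<Union>M = X \<and>
     (\<forall>C\<in>M. \<forall>C'\<in>M. C \<subseteq> C' \<longrightarrow> C = C') \<and>
     finite Os \<and> Os \<noteq> {}"

definition marg :: "'o set \<Rightarrow> 'x set \<Rightarrow> (('x \<rightharpoonup> 'o) \<Rightarrow> real) \<Rightarrow> 'x set \<Rightarrow> ('x \<rightharpoonup> 'o) \<Rightarrow> real" where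
  "marg Os C p U s = (\<Sum>r\<in>{r\<in>sections Os C. r |` U = s}. p r)"

definition prob_dist :: "'a set \<Rightarrow> ('a \<Rightarrow> real) \<Rightarrow> bool" where
  "prob_dist S p \<longleftrightarrow> (\<forall>r\<in>S. 0 \<le> p r) \<and> sum p S = 1"

definition empirical_model ::
  "'x set \<Rightarrow> 'x set set \<Rightarrow> 'o set \<Rightarrow> ('x set \<Rightarrow> ('x \<rightharpoonup> 'o) \<Rightarrow> real) \<Rightarrow> bool" where
  "empirical_model X M Os e \<longleftrightarrow>
     (\<forall>C\<in>M. prob_dist (sections Os C) (e C)) \<and>
     (\<forall>C\<in>M. \<forall>C'\<in>M. \<forall>s\<in>sections Os (C \<inter> C').
        marg Os C (e C) (C \<inter> C') s = marg Os C' (e C') (C \<inter> C') s)"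

definition consistent_support ::
  "'x set set \<Rightarrow> ('x set \<Rightarrow> ('x \<rightharpoonup> 'o) \<Rightarrow> real) \<Rightarrow> ('x \<rightharpoonup> 'o) \<Rightarrow> bool" where
  "consistent_support M e s \<longleftrightarrow> (\<forall>C\<in>M. e C (s |` C) > 0)"

definition strongly_contextual ::
  "'x set \<Rightarrow> 'x set set \<Rightarrow> 'o set \<Rightarrow> ('x set \<Rightarrow> ('x \<rightharpoonup> 'o) \<Rightarrow> real) \<Rightarrow> bool" where
  "strongly_contextual X M Os e \<longleftrightarrow>
     \<not> (\<exists>s\<in>sections Os X. consistent_support M e s)"

definition logically_contextual ::
  "'x set \<Rightarrow> 'x set set \<Rightarrow> 'o set \<Rightarrow> ('x set \<Rightarrow> ('x \<rightharpoonup> 'o) \<Rightarrow> real) \<Rightarrow> bool" where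
  "logically_contextual X M Os e \<longleftrightarrow>
     (\<exists>C\<in>M. \<exists>t\<in>sections Os C. e C t > 0 \<and>
        \<not> (\<exists>s\<in>sections Os X. s |` C = t \<and> consistent_support M e s))"

definition probabilistically_contextual ::
  "'x set \<Rightarrow> 'x set set \<Rightarrow> 'o set \<Rightarrow> ('x set \<Rightarrow> ('x \<rightharpoonup> 'o) \<Rightarrow> real) \<Rightarrow> bool" where
  "probabilistically_contextual X M Os e \<longleftrightarrow>
     \<not> (\<exists>eX. prob_dist (sections Os X) eX \<and>
            (\<forall>C\<in>M. \<forall>t\<in>sections Os C. marg Os X eX C t = e C t))"

definition contexts :: "'x set set \<Rightarrow> 'x set set" where
  "contexts M = {U. \<exists>C\<in>M. U \<subseteq> C}"

inductive_set gen_alg :: "'y set \<Rightarrow> 'y set set \<Rightarrow> 'y set set" for Y G where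
  gen: "A \<in> G \<Longrightarrow> A \<in> gen_alg Y G"
| top: "Y \<in> gen_alg Y G"
| compl: "A \<in> gen_alg Y G \<Longrightarrow> Y - A \<in> gen_alg Y G"
| union: "A \<in> gen_alg Y G \<Longrightarrow> B \<in> gen_alg Y G \<Longrightarrow> A \<union> B \<in> gen_alg Y G"

definition event_rep ::
  "'x set \<Rightarrow> 'o set \<Rightarrow> 'y set \<Rightarrow> (('x \<rightharpoonup> 'o) \<Rightarrow> 'y set) \<Rightarrow> bool" where
  "event_rep X Os Y Eb \<longleftrightarrow>
     (\<forall>U\<in>Pow X. \<forall>s\<in>sections Os U. Eb s \<subseteq> Y) \<and>
     inj_on Eb (\<Union>U\<in>Pow X. sections Os U) \<and>
     (\<forall>U\<in>Pow X. U \<noteq> {} \<longrightarrow> (\<forall>s\<in>sections Os U.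
        Eb s = (\<Inter>x\<in>U. Eb (s |` {x})) \<and> Eb s \<noteq> {}))"

definition SigU :: "'o set \<Rightarrow> 'y set \<Rightarrow> (('x \<rightharpoonup> 'o) \<Rightarrow> 'y set) \<Rightarrow> 'x set \<Rightarrow> 'y set set" where
  "SigU Os Y Eb U = gen_alg Y {Eb s | s x. x \<in> U \<and> s \<in> sections Os {x}}"

definition Sig :: "'x set set \<Rightarrow> 'o set \<Rightarrow> 'y set \<Rightarrow> (('x \<rightharpoonup> 'o) \<Rightarrow> 'y set) \<Rightarrow> 'y set set" where
  "Sig M Os Y Eb = (\<Union>U\<in>{U\<in>contexts M. U \<noteq> {}}. SigU Os Y Eb U)"

definition fa_prob :: "'y set \<Rightarrow> 'y set set \<Rightarrow> ('y set \<Rightarrow> real) \<Rightarrow> bool" where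
  "fa_prob Y A \<mu> \<longleftrightarrow> \<mu> Y = 1 \<and> (\<forall>a\<in>A. 0 \<le> \<mu> a) \<and>
     (\<forall>a\<in>A. \<forall>b\<in>A. a \<inter> b = {} \<longrightarrow> \<mu> (a \<union> b) = \<mu> a + \<mu> b)"

definition wps_rep ::
  "'x set \<Rightarrow> 'x set set \<Rightarrow> 'o set \<Rightarrow> ('x set \<Rightarrow> ('x \<rightharpoonup> 'o) \<Rightarrow> real)
   \<Rightarrow> 'y set \<Rightarrow> (('x \<rightharpoonup> 'o) \<Rightarrow> 'y set) \<Rightarrow> ('y set \<Rightarrow> real) \<Rightarrow> bool" where
  "wps_rep X M Os e Y Eb \<mu> \<longleftrightarrow>
     event_rep X Os Y Eb \<and>
     (\<forall>U\<in>contexts M. U \<noteq> {} \<longrightarrow> fa_prob Y (SigU Os Y Eb U) \<mu>) \<and>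
     (\<forall>C\<in>M. \<forall>U. U \<subseteq> C \<longrightarrow> U \<noteq> {} \<longrightarrow>
        (\<forall>s\<in>sections Os U. \<mu> (Eb s) = marg Os C (e C) U s)) \<and>
     (\<forall>U\<in>contexts M. \<forall>s\<in>sections Os U. \<forall>s'\<in>sections Os U.
        s \<noteq> s' \<longrightarrow> \<mu> (Eb s \<inter> Eb s') = 0)"

definition defect :: "('y set \<Rightarrow> real) \<Rightarrow> 'y set set \<Rightarrow> real" where
  "defect \<mu> V = \<mu> (\<Union>V) - (\<Sum>A\<in>V. \<mu> A)"

definition monotonic_extension ::
  "'y set \<Rightarrow> 'y set set \<Rightarrow> ('y set \<Rightarrow> real) \<Rightarrow> 'y set set \<Rightarrow> ('y set \<Rightarrow> real) \<Rightarrow> bool" where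
  "monotonic_extension Y \<Sigma> \<mu> \<Sigma>' \<mu>' \<longleftrightarrow>
     \<Sigma>' \<subseteq> Pow Y \<and> gen_alg Y \<Sigma> \<subseteq> \<Sigma>' \<and> (\<forall>A\<in>\<Sigma>. \<mu>' A = \<mu> A) \<and>
     (\<forall>A\<in>\<Sigma>'. 0 \<le> \<mu>' A \<and> \<mu>' A \<le> 1) \<and>
     (\<forall>A\<in>\<Sigma>'. \<forall>B\<in>\<Sigma>'. A \<subseteq> B \<longrightarrow> \<mu>' A \<le> \<mu>' B)"

end

theory Submission
  imports Defs "HOL-Analysis.Sigma_Algebra"
begin

text \<open>
  Outside a finite union of \<mu>-null events -- the points lying in no event of an outcome of some
  measurement x, or in the events of two different outcomes of x -- every point y of Y selects one
  outcome per measurement, hence a global section s with y \<in> Eb t exactly when t is a restriction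
  of s. Adding the null events Eb (s |` C) with e C (s |` C) = 0 makes s consistent with the support.
  So under strong contextuality these null events cover Y, and the defect is \<mu> Y - 0 = 1; under
  logical contextuality at t they cover Y together with Y - Eb t, whose measure is 1 - e C t < 1.
  Finally, an extension additive on disjoint pairs is a finitely additive probability on the algebra
  generated by \<Sigma>, and since Eb t is, up to the null part, the union of the almost disjoint Eb s over
  the global extensions s of t, the values \<mu>' (Eb s) form a global distribution with marginals e C.
\<close>

lemma gen_alg_subset_Pow: "G \<subseteq> Pow Y \<Longrightarrow> gen_alg Y G \<subseteq> Pow Y"
proof
  fix A assume "G \<subseteq> Pow Y" "A \<in> gen_alg Y G"
  from this(2) show "A \<in> Pow Y" using \<open>G \<subseteq> Pow Y\<close> by induction auto
qed

lemma algebra_gen_alg: "G \<subseteq> Pow Y \<Longrightarrow> algebra Y (gen_alg Y G)"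
  unfolding algebra_iff_Un using gen_alg_subset_Pow
  by (metis Diff_cancel gen_alg.compl gen_alg.top gen_alg.union)

locale fa_prob_space = algebra \<Omega> A for \<Omega> A +
  fixes m :: "'a set \<Rightarrow> real"
  assumes fa_prob: "fa_prob \<Omega> A m"
begin

lemma nonneg: "a \<in> A \<Longrightarrow> 0 \<le> m a"
  using fa_prob unfolding fa_prob_def by auto

lemma additive: "a \<in> A \<Longrightarrow> b \<in> A \<Longrightarrow> a \<inter> b = {} \<Longrightarrow> m (a \<union> b) = m a + m b"
  using fa_prob unfolding fa_prob_def by auto

lemma space: "m \<Omega> = 1"
  using fa_prob unfolding fa_prob_def by auto

lemma empty: "m {} = 0"
  using additive[of "{}" "{}"] by simp

lemma Un_Int: "a \<in> A \<Longrightarrow> b \<in> A \<Longrightarrow> m (a \<union> b) + m (a \<inter> b) = m a + m b"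
proof -
  assume a: "a \<in> A" and b: "b \<in> A"
  have "b - a \<in> A" "a \<inter> b \<in> A" using a b by auto
  moreover have "a \<union> b = a \<union> (b - a)" "b = (a \<inter> b) \<union> (b - a)" by auto
  ultimately have "m (a \<union> b) = m a + m (b - a)" "m b = m (a \<inter> b) + m (b - a)"
    using additive[of a "b - a"] additive[of "a \<inter> b" "b - a"] a by auto
  then show ?thesis by simp
qed

lemma compl: "a \<in> A \<Longrightarrow> m (\<Omega> - a) = 1 - m a"
proof -
  assume a: "a \<in> A"
  then have "m (a \<union> (\<Omega> - a)) = m a + m (\<Omega> - a)" by (intro additive) auto
  moreover have "a \<union> (\<Omega> - a) = \<Omega>" using sets_into_space[OF a] by blast
  ultimately show ?thesis using space by simp
qed

lemma mono: "a \<in> A \<Longrightarrow> b \<in> A \<Longrightarrow> a \<subseteq> b \<Longrightarrow> m a \<le> m b"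
proof -
  assume a: "a \<in> A" and b: "b \<in> A" and "a \<subseteq> b"
  then have "m b = m a + m (b - a)"
    using additive[of a "b - a"] Diff[OF b a] by (simp add: Un_absorb1)
  with nonneg[OF Diff[OF b a]] show ?thesis by simp
qed

lemma Un_le: "a \<in> A \<Longrightarrow> b \<in> A \<Longrightarrow> m (a \<union> b) \<le> m a + m b"
  using Un_Int[of a b] nonneg[OF Int[of a b]] by linarith

lemma finite_Union_le: "finite F \<Longrightarrow> F \<subseteq> A \<Longrightarrow> m (\<Union>F) \<le> sum m F"
proof (induction F rule: finite_induct)
  case (insert a F)
  then have "m (a \<union> \<Union>F) \<le> m a + m (\<Union>F)" using Un_le[of a "\<Union>F"] finite_Union by simp
  with insert show ?case by simp
qed (simp add: empty)

lemma null_Union: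
  assumes "finite F" "F \<subseteq> A" "\<And>a. a \<in> F \<Longrightarrow> m a = 0"
  shows "m (\<Union>F) = 0"
proof -
  have "m (\<Union>F) \<le> 0" using finite_Union_le[OF assms(1,2)] assms(3) by simp
  with nonneg[OF finite_Union[OF assms(1,2)]] show ?thesis by simp
qed

lemma null_subset: "a \<in> A \<Longrightarrow> n \<in> A \<Longrightarrow> a \<subseteq> n \<Longrightarrow> m n = 0 \<Longrightarrow> m a = 0"
  using mono[of a n] nonneg[of a] by simp

lemma finite_Union_null_overlap:
  "finite F \<Longrightarrow> F \<subseteq> A \<Longrightarrow> pairwise (\<lambda>a b. m (a \<inter> b) = 0) F \<Longrightarrow> m (\<Union>F) = sum m F"
proof (induction F rule: finite_induct)
  case (insert a F)
  have a: "a \<in> A" and F: "F \<subseteq> A" using insert.prems(1) by auto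
  have overlaps: "(\<inter>) a ` F \<subseteq> A" using a F by blast
  have overlap_null: "m c = 0" if "c \<in> (\<inter>) a ` F" for c
  proof -
    obtain b where b: "b \<in> F" "c = a \<inter> b" using \<open>c \<in> (\<inter>) a ` F\<close> by blast
    then have "b \<noteq> a" using insert.hyps(2) by blast
    then show ?thesis using insert.prems(2) b unfolding pairwise_def by simp
  qed
  have "a \<inter> \<Union>F = \<Union>((\<inter>) a ` F)" by blast
  then have "m (a \<inter> \<Union>F) = 0"
    using null_Union[OF finite_imageI[OF insert.hyps(1)] overlaps overlap_null] by simp
  then have "m (a \<union> \<Union>F) = m a + m (\<Union>F)"
    using Un_Int[OF a finite_Union[OF insert.hyps(1) F]] by simp
  moreover have "m (\<Union>F) = sum m F"
    using insert.IH[OF F] insert.prems(2) by (simp add: pairwise_insert)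
  ultimately show ?case using insert.hyps by simp
qed (simp add: empty)

lemma eq_if_subset_Un_null:
  assumes "a \<in> A" "b \<in> A" "n \<in> A" "b \<subseteq> a" "a \<subseteq> b \<union> n" "m n = 0"
  shows "m a = m b"
proof -
  have "m a \<le> m b + m n"
    using mono[of a "b \<union> n"] Un_le[of b n] Un[of b n] assms by simp
  with mono[of b a] assms show ?thesis by simp
qed

end

lemma fa_prob_space_pairwise_additive_extension:
  assumes "S \<subseteq> Pow Y" "Y \<in> S" "\<mu> Y = 1" "{} \<in> S" "\<mu> {} = 0"
    and ext: "monotonic_extension Y S \<mu> S' \<mu>'"
    and additive: "\<And>a b. a \<in> gen_alg Y S \<Longrightarrow> b \<in> gen_alg Y S \<Longrightarrow> a \<noteq> b \<Longrightarrow> a \<inter> b = {} \<Longrightarrow>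
      \<mu>' (a \<union> b) = \<mu>' a + \<mu>' b"
  shows "fa_prob_space Y (gen_alg Y S) \<mu>'"
proof -
  have G: "gen_alg Y S \<subseteq> S'" and agree: "\<And>A. A \<in> S \<Longrightarrow> \<mu>' A = \<mu> A"
    and nonneg: "\<And>A. A \<in> S' \<Longrightarrow> 0 \<le> \<mu>' A"
    using ext unfolding monotonic_extension_def by auto
  have "fa_prob Y (gen_alg Y S) \<mu>'"
    unfolding fa_prob_def
  proof (intro conjI ballI impI)
    show "\<mu>' Y = 1" using agree assms(2,3) by simp
    show "0 \<le> \<mu>' a" if "a \<in> gen_alg Y S" for a using that G nonneg by blast
    show "\<mu>' (a \<union> b) = \<mu>' a + \<mu>' b" if "a \<in> gen_alg Y S" "b \<in> gen_alg Y S" "a \<inter> b = {}" for a b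
    proof (cases "a = b")
      case True
      then show ?thesis using that(3) agree assms(4,5) by simp
    qed (use that additive in blast)
  qed
  then show ?thesis using algebra_gen_alg[OF assms(1)] by (simp add: fa_prob_space_def fa_prob_space_axioms_def)
qed

lemma finite_sections: "finite Os \<Longrightarrow> finite U \<Longrightarrow> finite (sections Os U)"
  unfolding sections_def by (rule finite_set_of_finite_maps)

lemma sections_empty: "sections Os {} = {Map.empty}"
  unfolding sections_def by auto

lemma restrict_map_in_sections: "s \<in> sections Os U \<Longrightarrow> V \<subseteq> U \<Longrightarrow> s |` V \<in> sections Os V"
  unfolding sections_def ran_def by (auto simp: restrict_map_def split: if_splits)

lemma restrict_map_sections_self: "s \<in> sections Os U \<Longrightarrow> s |` U = s"
  unfolding sections_def by (rule ext) (auto simp: restrict_map_def)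

lemma sections_eqI:
  assumes "s \<in> sections Os U" "t \<in> sections Os U" "\<And>x. x \<in> U \<Longrightarrow> s |` {x} = t |` {x}"
  shows "s = t"
proof
  fix x show "s x = t x"
  proof (cases "x \<in> U")
    case True
    then show ?thesis using assms(3)[of x] by (metis restrict_in singletonI)
  next
    case False
    then show ?thesis using assms(1,2) unfolding sections_def by (auto simp: domIff)
  qed
qed

lemma sections_glue:
  assumes "\<And>x. x \<in> U \<Longrightarrow> r x \<in> sections Os {x}"
  obtains s where "s \<in> sections Os U" "\<And>x. x \<in> U \<Longrightarrow> s |` {x} = r x"
proof
  define s where "s z = (if z \<in> U then r z z else None)" for z
  show "s |` {x} = r x" if "x \<in> U" for x
    using assms[OF that] unfolding sections_def s_def
    by (intro ext) (auto simp: restrict_map_def domIff that)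
  show "s \<in> sections Os U"
    using assms unfolding sections_def s_def dom_def ran_def by (auto split: if_splits)
qed

lemma marg_self: "t \<in> sections Os C \<Longrightarrow> marg Os C p C t = p t"
proof -
  assume t: "t \<in> sections Os C"
  then have "{r \<in> sections Os C. r |` C = t} = {t}"
    using restrict_map_sections_self by fastforce
  then show ?thesis unfolding marg_def by simp
qed

lemma sum_marg:
  assumes "finite Os" "finite C" "U \<subseteq> C"
  shows "(\<Sum>r\<in>sections Os U. marg Os C p U r) = sum p (sections Os C)"
  unfolding marg_def
proof (rule sum.group)
  show "finite (sections Os C)" using assms finite_sections by blast
  show "finite (sections Os U)" using assms finite_sections finite_subset by blast
  show "(\<lambda>r. r |` U) ` sections Os C \<subseteq> sections Os U" using assms(3) restrict_map_in_sections by blast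
qed

locale wps_representation =
  fixes X :: "'x set" and M :: "'x set set" and Os :: "'o set"
    and e :: "'x set \<Rightarrow> ('x \<rightharpoonup> 'o) \<Rightarrow> real"
    and Y :: "'y set" and Eb :: "('x \<rightharpoonup> 'o) \<Rightarrow> 'y set" and \<mu> :: "'y set \<Rightarrow> real"
  assumes scenario: "empirical_scenario X M Os"
    and model: "empirical_model X M Os e"
    and wps: "wps_rep X M Os e Y Eb \<mu>"
begin

lemma finite_measurements: "finite X"
  and finite_outcomes: "finite Os"
  and maximal_context_subset: "C \<in> M \<Longrightarrow> C \<subseteq> X"
  and Union_maximal_contexts: "\<Union>M = X"
  and maximal_contexts_antichain: "C \<in> M \<Longrightarrow> C' \<in> M \<Longrightarrow> C \<subseteq> C' \<Longrightarrow> C = C'"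
  using scenario unfolding empirical_scenario_def by auto

lemma prob_dist_model: "C \<in> M \<Longrightarrow> prob_dist (sections Os C) (e C)"
  using model unfolding empirical_model_def by auto

lemma measure_Eb_marg:
  "C \<in> M \<Longrightarrow> U \<subseteq> C \<Longrightarrow> U \<noteq> {} \<Longrightarrow> s \<in> sections Os U \<Longrightarrow> \<mu> (Eb s) = marg Os C (e C) U s"
  using wps unfolding wps_rep_def by auto

lemma measure_Eb_overlap:
  "U \<in> contexts M \<Longrightarrow> s \<in> sections Os U \<Longrightarrow> s' \<in> sections Os U \<Longrightarrow> s \<noteq> s' \<Longrightarrow> \<mu> (Eb s \<inter> Eb s') = 0"
  using wps unfolding wps_rep_def by auto

lemma Eb_subset_space: "U \<subseteq> X \<Longrightarrow> s \<in> sections Os U \<Longrightarrow> Eb s \<subseteq> Y"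
  using wps unfolding wps_rep_def event_rep_def by auto

lemma Eb_eq_INT: "U \<subseteq> X \<Longrightarrow> U \<noteq> {} \<Longrightarrow> s \<in> sections Os U \<Longrightarrow> Eb s = (\<Inter>x\<in>U. Eb (s |` {x}))"
  using wps unfolding wps_rep_def event_rep_def by auto

lemma inj_on_Eb: "U \<subseteq> X \<Longrightarrow> inj_on Eb (sections Os U)"
  using wps unfolding wps_rep_def event_rep_def by (auto intro: inj_on_subset)

lemma Eb_restrict_subset:
  assumes "U \<subseteq> X" "U \<noteq> {}" "s \<in> sections Os U" "V \<subseteq> U" "V \<noteq> {}"
  shows "Eb s \<subseteq> Eb (s |` V)"
  using assms Eb_eq_INT[of U s] Eb_eq_INT[of V "s |` V"] restrict_map_in_sections[of s Os U V]
  by (auto simp: subset_iff)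

lemma maximal_context_nonempty: "X \<noteq> {} \<Longrightarrow> C \<in> M \<Longrightarrow> C \<noteq> {}"
  using Union_maximal_contexts maximal_contexts_antichain by blast

lemma measurement_in_maximal_context: "x \<in> X \<Longrightarrow> \<exists>C\<in>M. x \<in> C"
  using Union_maximal_contexts by blast

lemma contexts_subset: "U \<in> contexts M \<Longrightarrow> U \<subseteq> X"
  unfolding contexts_def using maximal_context_subset by blast

lemma singleton_in_contexts: "x \<in> X \<Longrightarrow> {x} \<in> contexts M"
  unfolding contexts_def using Union_maximal_contexts by blast

lemma maximal_context_in_contexts: "C \<in> M \<Longrightarrow> C \<in> contexts M"
  unfolding contexts_def by blast

lemma algebra_SigU: "U \<subseteq> X \<Longrightarrow> algebra Y (SigU Os Y Eb U)"
  unfolding SigU_def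
proof (rule algebra_gen_alg, safe)
  fix s x y assume "x \<in> U" "s \<in> sections Os {x}" "y \<in> Eb s" "U \<subseteq> X"
  then show "y \<in> Y" using Eb_subset_space[of "{x}" s] by blast
qed

lemma fa_prob_space_SigU:
  assumes "U \<in> contexts M" "U \<noteq> {}"
  shows "fa_prob_space Y (SigU Os Y Eb U) \<mu>"
proof -
  have "fa_prob Y (SigU Os Y Eb U) \<mu>" using wps assms unfolding wps_rep_def by simp
  with algebra_SigU[OF contexts_subset[OF assms(1)]] show ?thesis
    by (simp add: fa_prob_space_def fa_prob_space_axioms_def)
qed

lemma SigU_subset_Sig: "U \<in> contexts M \<Longrightarrow> U \<noteq> {} \<Longrightarrow> SigU Os Y Eb U \<subseteq> Sig M Os Y Eb"
  unfolding Sig_def by blast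

lemma Sig_subset_Pow: "Sig M Os Y Eb \<subseteq> Pow Y"
proof
  fix A assume "A \<in> Sig M Os Y Eb"
  then obtain U where "U \<in> contexts M" "A \<in> SigU Os Y Eb U" unfolding Sig_def by blast
  then interpret algebra Y "SigU Os Y Eb U" using algebra_SigU[OF contexts_subset] by simp
  show "A \<in> Pow Y" using sets_into_space \<open>A \<in> SigU Os Y Eb U\<close> by simp
qed

lemma Eb_singleton_in_SigU: "x \<in> U \<Longrightarrow> r \<in> sections Os {x} \<Longrightarrow> Eb r \<in> SigU Os Y Eb U"
  unfolding SigU_def by (rule gen_alg.gen) blast

lemma Eb_in_SigU:
  assumes "U \<subseteq> X" "U \<noteq> {}" "s \<in> sections Os U"
  shows "Eb s \<in> SigU Os Y Eb U"
proof -
  interpret algebra Y "SigU Os Y Eb U" using algebra_SigU[OF assms(1)] .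
  have "(\<Inter>x\<in>U. Eb (s |` {x})) \<in> SigU Os Y Eb U"
    using assms finite_subset[OF assms(1) finite_measurements]
    by (intro finite_INT) (auto intro: Eb_singleton_in_SigU restrict_map_in_sections)
  then show ?thesis using Eb_eq_INT[OF assms] by simp
qed


lemma measure_Eb_maximal_context:
  "C \<in> M \<Longrightarrow> C \<noteq> {} \<Longrightarrow> t \<in> sections Os C \<Longrightarrow> \<mu> (Eb t) = e C t"
  using measure_Eb_marg[of C C t] marg_self[of t Os C] by simp

lemma measure_Union_singleton_events:
  assumes "x \<in> X"
  shows "\<mu> (\<Union>r\<in>sections Os {x}. Eb r) = 1"
proof -
  interpret fa_prob_space Y "SigU Os Y Eb {x}" \<mu>
    by (rule fa_prob_space_SigU[OF singleton_in_contexts[OF assms]]) simp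
  obtain C where C: "C \<in> M" "x \<in> C" using measurement_in_maximal_context[OF assms] by blast
  have fin: "finite (sections Os {x})" using finite_sections[OF finite_outcomes, of "{x}"] by simp
  have "\<mu> (\<Union>r\<in>sections Os {x}. Eb r) = sum \<mu> (Eb ` sections Os {x})"
  proof (rule finite_Union_null_overlap)
    show "Eb ` sections Os {x} \<subseteq> SigU Os Y Eb {x}" using Eb_singleton_in_SigU by blast
    show "pairwise (\<lambda>a b. \<mu> (a \<inter> b) = 0) (Eb ` sections Os {x})"
      using measure_Eb_overlap[OF singleton_in_contexts[OF assms]] unfolding pairwise_def by blast
  qed (use fin in simp)
  also have "\<dots> = (\<Sum>r\<in>sections Os {x}. \<mu> (Eb r))"
    using sum.reindex[OF inj_on_Eb[of "{x}"]] assms by simp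
  also have "\<dots> = (\<Sum>r\<in>sections Os {x}. marg Os C (e C) {x} r)"
    using measure_Eb_marg[OF C(1), of "{x}"] C(2) by (intro sum.cong) auto
  also have "\<dots> = sum (e C) (sections Os C)"
    using sum_marg[OF finite_outcomes finite_subset[OF maximal_context_subset[OF C(1)] finite_measurements]] C(2)
    by simp
  also have "\<dots> = 1" using prob_dist_model[OF C(1)] unfolding prob_dist_def by simp
  finally show ?thesis .
qed

definition uncovered_event :: "'x \<Rightarrow> 'y set" where
  "uncovered_event x = Y - (\<Union>r\<in>sections Os {x}. Eb r)"

definition overlap_events :: "'x \<Rightarrow> 'y set set" where
  "overlap_events x = {Eb r \<inter> Eb r' | r r'. r \<in> sections Os {x} \<and> r' \<in> sections Os {x} \<and> r \<noteq> r'}"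

definition local_null_events :: "'y set set" where
  "local_null_events = (\<Union>x\<in>X. insert (uncovered_event x) (overlap_events x))"

lemma local_null_event:
  assumes "A \<in> local_null_events"
  shows "A \<in> Sig M Os Y Eb" "\<mu> A = 0"
proof -
  obtain x where x: "x \<in> X" "A = uncovered_event x \<or> A \<in> overlap_events x"
    using assms unfolding local_null_events_def by blast
  interpret fa_prob_space Y "SigU Os Y Eb {x}" \<mu>
    by (rule fa_prob_space_SigU[OF singleton_in_contexts[OF x(1)]]) simp
  have "A \<in> SigU Os Y Eb {x} \<and> \<mu> A = 0"
    using x(2)
  proof
    assume A: "A = uncovered_event x"
    have "(\<Union>r\<in>sections Os {x}. Eb r) \<in> SigU Os Y Eb {x}"
      using finite_sections[OF finite_outcomes, of "{x}"] Eb_singleton_in_SigU by blast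
    then show ?thesis
      unfolding A uncovered_event_def using compl measure_Union_singleton_events[OF x(1)] by auto
  next
    assume "A \<in> overlap_events x"
    then obtain r r' where "r \<in> sections Os {x}" "r' \<in> sections Os {x}" "r \<noteq> r'" "A = Eb r \<inter> Eb r'"
      unfolding overlap_events_def by blast
    then show ?thesis
      using measure_Eb_overlap[OF singleton_in_contexts[OF x(1)]] Eb_singleton_in_SigU[of x "{x}"] by blast
  qed
  then show "A \<in> Sig M Os Y Eb" "\<mu> A = 0"
    using SigU_subset_Sig[OF singleton_in_contexts[OF x(1)]] by auto
qed

lemma finite_local_null_events: "finite local_null_events"
proof -
  have "finite (overlap_events x)" for x
  proof (rule finite_subset)
    show "overlap_events x \<subseteq> {Eb r \<inter> Eb r' | r r'. r \<in> sections Os {x} \<and> r' \<in> sections Os {x}}"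
      unfolding overlap_events_def by blast
    show "finite {Eb r \<inter> Eb r' | r r'. r \<in> sections Os {x} \<and> r' \<in> sections Os {x}}"
      using finite_sections[OF finite_outcomes, of "{x}"] by (intro finite_image_set2) simp_all
  qed
  then show ?thesis unfolding local_null_events_def using finite_measurements by blast
qed


lemma unique_singleton_section_of_point:
  assumes "y \<in> Y" "y \<notin> \<Union>local_null_events" "x \<in> X"
  shows "\<exists>!r. r \<in> sections Os {x} \<and> y \<in> Eb r"
proof -
  have "y \<notin> uncovered_event x" "\<And>A. A \<in> overlap_events x \<Longrightarrow> y \<notin> A"
    using assms(2,3) unfolding local_null_events_def by blast+
  then show ?thesis
    using assms(1) unfolding uncovered_event_def overlap_events_def by blast
qed

text \<open>The event representation constrains Eb only on sections with nonempty domain, hence the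
  hypothesis X \<noteq> {} here and below; the case X = {} is trivially noncontextual.\<close>

lemma section_of_point:
  assumes "X \<noteq> {}" "y \<in> Y" "y \<notin> \<Union>local_null_events"
  obtains s where "s \<in> sections Os X" "y \<in> Eb s"
    "\<And>U t. U \<subseteq> X \<Longrightarrow> U \<noteq> {} \<Longrightarrow> t \<in> sections Os U \<Longrightarrow> y \<in> Eb t \<Longrightarrow> t = s |` U"
proof -
  obtain r where r: "\<And>x. x \<in> X \<Longrightarrow> r x \<in> sections Os {x} \<and> y \<in> Eb (r x)"
    using unique_singleton_section_of_point[OF assms(2,3)] by metis
  obtain s where s: "s \<in> sections Os X" "\<And>x. x \<in> X \<Longrightarrow> s |` {x} = r x"
    using sections_glue[of X r Os] r by blast
  have "y \<in> Eb s"
    using Eb_eq_INT[OF order_refl assms(1) s(1)] r s(2) by simp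
  moreover have "t = s |` U"
    if U: "U \<subseteq> X" "U \<noteq> {}" and t: "t \<in> sections Os U" "y \<in> Eb t" for U t
  proof (rule sections_eqI[OF t(1) restrict_map_in_sections[OF s(1) U(1)]])
    fix x assume x: "x \<in> U"
    have "t |` {x} \<in> sections Os {x}" "y \<in> Eb (t |` {x})"
      using restrict_map_in_sections[OF t(1)] Eb_restrict_subset[OF U t(1), of "{x}"] t(2) x by auto
    then have "t |` {x} = r x"
      using unique_singleton_section_of_point[OF assms(2,3)] r x U(1) by blast
    then show "t |` {x} = (s |` U) |` {x}" using s(2) x U(1) by auto
  qed
  ultimately show ?thesis using that s(1) by blast
qed

definition support_null_events :: "'y set set" where
  "support_null_events = {Eb (s |` C) | s C. s \<in> sections Os X \<and> C \<in> M \<and> e C (s |` C) = 0}"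

lemma support_null_event:
  assumes "X \<noteq> {}" "A \<in> support_null_events"
  shows "A \<in> Sig M Os Y Eb" "\<mu> A = 0"
proof -
  obtain s C where s: "s \<in> sections Os X" and C: "C \<in> M" and "e C (s |` C) = 0" "A = Eb (s |` C)"
    using assms(2) unfolding support_null_events_def by blast
  moreover have "C \<noteq> {}" "C \<subseteq> X"
    using maximal_context_nonempty[OF assms(1) C] maximal_context_subset[OF C] .
  moreover have "s |` C \<in> sections Os C" using restrict_map_in_sections[OF s \<open>C \<subseteq> X\<close>] .
  ultimately show "A \<in> Sig M Os Y Eb" "\<mu> A = 0"
    using Eb_in_SigU SigU_subset_Sig[OF maximal_context_in_contexts[OF C]] measure_Eb_maximal_context[OF C]
    by auto
qed

lemma finite_support_null_events: "finite support_null_events"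
proof -
  have "finite M" using maximal_context_subset finite_measurements by (meson PowI finite_Pow_iff finite_subset subsetI)
  then have "finite {Eb (s |` C) | s C. s \<in> sections Os X \<and> C \<in> M}"
    using finite_sections[OF finite_outcomes finite_measurements] by (intro finite_image_set2) simp_all
  then show ?thesis unfolding support_null_events_def by (rule rev_finite_subset) blast
qed

definition null_events :: "'y set set" where
  "null_events = local_null_events \<union> support_null_events"

lemma null_event:
  assumes "X \<noteq> {}" "A \<in> null_events"
  shows "A \<in> Sig M Os Y Eb" "\<mu> A = 0"
  using assms local_null_event support_null_event unfolding null_events_def by auto

lemma finite_null_events: "finite null_events"
  unfolding null_events_def using finite_local_null_events finite_support_null_events by simp

lemma consistent_section_of_point:
  assumes "X \<noteq> {}" "y \<in> Y" "y \<notin> \<Union>null_events"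
  obtains s where "s \<in> sections Os X" "consistent_support M e s" "y \<in> Eb s"
    "\<And>U t. U \<subseteq> X \<Longrightarrow> U \<noteq> {} \<Longrightarrow> t \<in> sections Os U \<Longrightarrow> y \<in> Eb t \<Longrightarrow> t = s |` U"
proof -
  obtain s where s: "s \<in> sections Os X" "y \<in> Eb s"
    "\<And>U t. U \<subseteq> X \<Longrightarrow> U \<noteq> {} \<Longrightarrow> t \<in> sections Os U \<Longrightarrow> y \<in> Eb t \<Longrightarrow> t = s |` U"
    using section_of_point[OF assms(1,2)] assms(3) unfolding null_events_def by blast
  have "e C (s |` C) > 0" if C: "C \<in> M" for C
  proof (rule ccontr)
    assume "\<not> e C (s |` C) > 0"
    moreover have "s |` C \<in> sections Os C"
      using restrict_map_in_sections[OF s(1) maximal_context_subset[OF C]] .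
    ultimately have "e C (s |` C) = 0"
      using prob_dist_model[OF C] unfolding prob_dist_def by force
    then have "Eb (s |` C) \<in> null_events"
      unfolding null_events_def support_null_events_def using s(1) C by blast
    moreover have "y \<in> Eb (s |` C)"
      using Eb_restrict_subset[OF order_refl assms(1) s(1) maximal_context_subset[OF C]
          maximal_context_nonempty[OF assms(1) C]] s(2) by blast
    ultimately show False using assms(3) by blast
  qed
  then show ?thesis using that s unfolding consistent_support_def by blast
qed


lemma space_empty_events:
  assumes "X \<noteq> {}"
  shows "Y \<in> Sig M Os Y Eb" "\<mu> Y = 1" "{} \<in> Sig M Os Y Eb" "\<mu> {} = 0"
proof -
  obtain C where C: "C \<in> M" "C \<noteq> {}"
    using assms Union_maximal_contexts maximal_context_nonempty by blast
  interpret fa_prob_space Y "SigU Os Y Eb C" \<mu>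
    by (rule fa_prob_space_SigU[OF maximal_context_in_contexts[OF C(1)] C(2)])
  show "Y \<in> Sig M Os Y Eb" "{} \<in> Sig M Os Y Eb"
    using SigU_subset_Sig[OF maximal_context_in_contexts[OF C(1)] C(2)] by blast+
  show "\<mu> Y = 1" "\<mu> {} = 0" by (rule space, rule empty)
qed

lemma empty_section_consistent: "X = {} \<Longrightarrow> consistent_support M e Map.empty"
  unfolding consistent_support_def
proof
  fix C assume "X = {}" "C \<in> M"
  then have "C = {}" using maximal_context_subset by blast
  then show "e C (Map.empty |` C) > 0"
    using prob_dist_model[OF \<open>C \<in> M\<close>] unfolding prob_dist_def by (simp add: sections_empty)
qed

lemma sum_null_events: "X \<noteq> {} \<Longrightarrow> sum \<mu> null_events = 0"
  using null_event(2) by simp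

lemma Eb_subset_null_events_if_no_consistent_extension:
  assumes "X \<noteq> {}" "U \<subseteq> X" "U \<noteq> {}" "t \<in> sections Os U"
    and "\<not> (\<exists>s\<in>sections Os X. s |` U = t \<and> consistent_support M e s)"
  shows "Eb t \<subseteq> \<Union>null_events"
proof
  fix y assume y: "y \<in> Eb t"
  show "y \<in> \<Union>null_events"
  proof (rule ccontr)
    assume not_null: "y \<notin> \<Union>null_events"
    have "y \<in> Y" using Eb_subset_space[OF assms(2,4)] y by blast
    then obtain s where "s \<in> sections Os X" "consistent_support M e s" "y \<in> Eb s"
      "\<And>U t. U \<subseteq> X \<Longrightarrow> U \<noteq> {} \<Longrightarrow> t \<in> sections Os U \<Longrightarrow> y \<in> Eb t \<Longrightarrow> t = s |` U"
      using consistent_section_of_point[OF assms(1) \<open>y \<in> Y\<close> not_null] by blast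
    with assms(2-5) y show False by blast
  qed
qed

lemma strongly_contextual_defect_eq_1:
  assumes "strongly_contextual X M Os e"
  shows "\<exists>V. finite V \<and> V \<subseteq> Sig M Os Y Eb \<and> \<Union>V \<in> Sig M Os Y Eb \<and> defect \<mu> V = 1"
proof -
  have X: "X \<noteq> {}"
    using assms empty_section_consistent sections_empty unfolding strongly_contextual_def by blast
  have "Y \<subseteq> \<Union>null_events"
  proof
    fix y assume "y \<in> Y"
    show "y \<in> \<Union>null_events"
    proof (rule ccontr)
      assume "y \<notin> \<Union>null_events"
      then obtain s where "s \<in> sections Os X" "consistent_support M e s"
        using consistent_section_of_point[OF X \<open>y \<in> Y\<close>] by blast
      with assms show False unfolding strongly_contextual_def by blast
    qed
  qed
  moreover have "\<Union>null_events \<subseteq> Y" using null_event(1)[OF X] Sig_subset_Pow by blast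
  ultimately have "\<Union>null_events = Y" by blast
  then show ?thesis
    using finite_null_events null_event(1)[OF X] space_empty_events(1,2)[OF X] sum_null_events[OF X]
    unfolding defect_def by (intro exI[of _ null_events]) auto
qed

lemma logically_contextual_defect_pos:
  assumes "logically_contextual X M Os e"
  shows "\<exists>V. finite V \<and> V \<subseteq> Sig M Os Y Eb \<and> \<Union>V \<in> Sig M Os Y Eb \<and> defect \<mu> V > 0"
proof -
  obtain C t where C: "C \<in> M" and t: "t \<in> sections Os C" "e C t > 0"
    and no_extension: "\<not> (\<exists>s\<in>sections Os X. s |` C = t \<and> consistent_support M e s)"
    using assms unfolding logically_contextual_def by blast
  have X: "X \<noteq> {}"
  proof
    assume "X = {}"
    then have "C = {}" "t = Map.empty"
      using maximal_context_subset[OF C] t(1) by (auto simp: sections_empty)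
    with \<open>X = {}\<close> no_extension show False
      using empty_section_consistent by (simp add: sections_empty)
  qed
  have CX: "C \<subseteq> X" "C \<noteq> {}"
    using maximal_context_subset[OF C] maximal_context_nonempty[OF X C] .
  interpret fa_prob_space Y "SigU Os Y Eb C" \<mu>
    by (rule fa_prob_space_SigU[OF maximal_context_in_contexts[OF C] CX(2)])
  define D where "D = Y - Eb t"
  have D: "D \<in> SigU Os Y Eb C" "\<mu> D = 1 - e C t"
    unfolding D_def using Eb_in_SigU[OF CX t(1)] compl measure_Eb_maximal_context[OF C CX(2) t(1)]
    by auto
  let ?V = "insert D null_events"
  have "\<Union>null_events \<subseteq> Y" using null_event(1)[OF X] Sig_subset_Pow by blast
  then have "\<Union>?V = Y"
    using Eb_subset_null_events_if_no_consistent_extension[OF X CX t(1) no_extension]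
    unfolding D_def by auto
  moreover have "sum \<mu> ?V \<le> \<mu> D"
    using finite_null_events sum_null_events[OF X] nonneg[OF D(1)] by (simp add: sum.insert_if)
  ultimately have "defect \<mu> ?V > 0"
    unfolding defect_def using space_empty_events(2)[OF X] D(2) t(2) by simp
  moreover have "?V \<subseteq> Sig M Os Y Eb"
    using null_event(1)[OF X] D(1) SigU_subset_Sig[OF maximal_context_in_contexts[OF C] CX(2)] by blast
  ultimately show ?thesis
    using finite_null_events space_empty_events(1)[OF X] \<open>\<Union>?V = Y\<close> by (intro exI[of _ ?V]) simp
qed

lemma Eb_in_gen_alg_Sig:
  assumes "U \<subseteq> X" "U \<noteq> {}" "s \<in> sections Os U"
  shows "Eb s \<in> gen_alg Y (Sig M Os Y Eb)"
proof -
  interpret algebra Y "gen_alg Y (Sig M Os Y Eb)" by (rule algebra_gen_alg[OF Sig_subset_Pow])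
  have "Eb (s |` {x}) \<in> gen_alg Y (Sig M Os Y Eb)" if "x \<in> U" for x
    using that assms Eb_singleton_in_SigU[of x "{x}"] restrict_map_in_sections[OF assms(3), of "{x}"]
      SigU_subset_Sig[OF singleton_in_contexts] by (blast intro: gen_alg.gen)
  then show ?thesis
    using Eb_eq_INT[OF assms] assms finite_subset[OF assms(1) finite_measurements] by auto
qed

lemma Eb_overlap_subset_local_null_events:
  assumes "U \<subseteq> X" "U \<noteq> {}" "s \<in> sections Os U" "s' \<in> sections Os U" "s \<noteq> s'"
  shows "Eb s \<inter> Eb s' \<subseteq> \<Union>local_null_events"
proof -
  obtain x where x: "x \<in> U" "s |` {x} \<noteq> s' |` {x}" using sections_eqI[OF assms(3,4)] assms(5) by blast
  then have "Eb (s |` {x}) \<inter> Eb (s' |` {x}) \<in> local_null_events"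
    using restrict_map_in_sections[OF assms(3), of "{x}"] restrict_map_in_sections[OF assms(4), of "{x}"] assms(1)
    unfolding local_null_events_def overlap_events_def by blast
  moreover have "Eb s \<inter> Eb s' \<subseteq> Eb (s |` {x}) \<inter> Eb (s' |` {x})"
    using Eb_restrict_subset[OF assms(1,2,3), of "{x}"] Eb_restrict_subset[OF assms(1,2,4), of "{x}"] x(1) by blast
  ultimately show ?thesis by blast
qed

lemma Eb_subset_extensions_Un_null:
  assumes "X \<noteq> {}" "C \<subseteq> X" "C \<noteq> {}" "t \<in> sections Os C"
  shows "Eb t \<subseteq> (\<Union>s\<in>{s \<in> sections Os X. s |` C = t}. Eb s) \<union> \<Union>local_null_events"
proof
  fix y assume y: "y \<in> Eb t"
  show "y \<in> (\<Union>s\<in>{s \<in> sections Os X. s |` C = t}. Eb s) \<union> \<Union>local_null_events"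
  proof (cases "y \<in> \<Union>local_null_events")
    case False
    moreover have "y \<in> Y" using Eb_subset_space[OF assms(2,4)] y by blast
    ultimately obtain s where "s \<in> sections Os X" "y \<in> Eb s"
      "\<And>U t. U \<subseteq> X \<Longrightarrow> U \<noteq> {} \<Longrightarrow> t \<in> sections Os U \<Longrightarrow> y \<in> Eb t \<Longrightarrow> t = s |` U"
      using section_of_point[OF assms(1)] by blast
    then show ?thesis using assms(2-4) y by auto
  qed simp
qed

lemma extensions_subset_Eb:
  assumes "X \<noteq> {}" "C \<subseteq> X" "C \<noteq> {}"
  shows "(\<Union>s\<in>{s \<in> sections Os X. s |` C = t}. Eb s) \<subseteq> Eb t"
  using Eb_restrict_subset[OF order_refl assms(1) _ assms(2,3)] by blast

lemma sum_extensions_measure_Eb: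
  assumes X: "X \<noteq> {}" and fa: "fa_prob_space Y (gen_alg Y (Sig M Os Y Eb)) \<mu>'"
    and agree: "\<And>A. A \<in> Sig M Os Y Eb \<Longrightarrow> \<mu>' A = \<mu> A"
    and C: "C \<in> M" and t: "t \<in> sections Os C"
  shows "(\<Sum>s\<in>{s \<in> sections Os X. s |` C = t}. \<mu>' (Eb s)) = e C t"
proof -
  let ?G = "gen_alg Y (Sig M Os Y Eb)" and ?ext = "{s \<in> sections Os X. s |` C = t}"
  interpret fa_prob_space Y ?G \<mu>' by (rule fa)
  define N where "N = \<Union>local_null_events"
  have N_G: "N \<in> ?G"
    unfolding N_def using local_null_event(1)
    by (intro finite_Union[OF finite_local_null_events]) (blast intro: gen_alg.gen)
  have "\<mu>' N = 0"
    unfolding N_def using local_null_event agree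
    by (intro null_Union[OF finite_local_null_events]) (auto intro: gen_alg.gen)
  note N = N_G this
  have CX: "C \<subseteq> X" "C \<noteq> {}" using maximal_context_subset[OF C] maximal_context_nonempty[OF X C] .
  have fin: "finite ?ext" using finite_sections[OF finite_outcomes finite_measurements] by simp
  have ext_G: "Eb ` ?ext \<subseteq> ?G" using Eb_in_gen_alg_Sig[OF order_refl X] by blast
  have "(\<Sum>s\<in>?ext. \<mu>' (Eb s)) = sum \<mu>' (Eb ` ?ext)"
    using sum.reindex[OF inj_on_subset[OF inj_on_Eb[OF order_refl]], of ?ext \<mu>'] by simp
  also have "\<dots> = \<mu>' (\<Union>(Eb ` ?ext))"
  proof (rule finite_Union_null_overlap[symmetric])
    show "pairwise (\<lambda>a b. \<mu>' (a \<inter> b) = 0) (Eb ` ?ext)"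
    proof (rule pairwiseI)
      fix a b assume "a \<in> Eb ` ?ext" "b \<in> Eb ` ?ext" "a \<noteq> b"
      then obtain s s' where "s \<in> ?ext" "s' \<in> ?ext" "s \<noteq> s'" "a = Eb s" "b = Eb s'" by blast
      then have "a \<inter> b \<subseteq> N"
        using Eb_overlap_subset_local_null_events[OF order_refl X, of s s'] unfolding N_def by blast
      moreover have "a \<inter> b \<in> ?G" using \<open>a \<in> Eb ` ?ext\<close> \<open>b \<in> Eb ` ?ext\<close> ext_G by blast
      ultimately show "\<mu>' (a \<inter> b) = 0" using null_subset N by blast
    qed
  qed (use fin ext_G in simp_all)
  also have "\<dots> = \<mu>' (Eb t)"
    using eq_if_subset_Un_null[OF Eb_in_gen_alg_Sig[OF CX t] finite_Union[OF _ ext_G] N(1)]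
      extensions_subset_Eb[OF X CX] Eb_subset_extensions_Un_null[OF X CX t] N(2) fin
    unfolding N_def by simp
  also have "\<dots> = e C t"
    using agree Eb_in_SigU[OF CX t] SigU_subset_Sig[OF maximal_context_in_contexts[OF C] CX(2)]
      measure_Eb_maximal_context[OF C CX(2) t] by auto
  finally show ?thesis .
qed

lemma pairwise_additive_extension_noncontextual:
  assumes X: "X \<noteq> {}" and ext: "monotonic_extension Y (Sig M Os Y Eb) \<mu> S' \<mu>'"
    and additive: "\<And>a b. a \<in> gen_alg Y (Sig M Os Y Eb) \<Longrightarrow> b \<in> gen_alg Y (Sig M Os Y Eb) \<Longrightarrow>
      a \<noteq> b \<Longrightarrow> a \<inter> b = {} \<Longrightarrow> \<mu>' (a \<union> b) = \<mu>' a + \<mu>' b"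
  shows "\<not> probabilistically_contextual X M Os e"
proof -
  have fa: "fa_prob_space Y (gen_alg Y (Sig M Os Y Eb)) \<mu>'"
    using fa_prob_space_pairwise_additive_extension[OF Sig_subset_Pow space_empty_events[OF X] ext]
      additive by blast
  have agree: "\<And>A. A \<in> Sig M Os Y Eb \<Longrightarrow> \<mu>' A = \<mu> A"
    using ext unfolding monotonic_extension_def by auto
  define eX where "eX s = \<mu>' (Eb s)" for s
  have marg_eq: "marg Os X eX C t = e C t" if "C \<in> M" "t \<in> sections Os C" for C t
    unfolding marg_def eX_def using sum_extensions_measure_Eb[OF X fa agree that] by simp
  have "prob_dist (sections Os X) eX"
    unfolding prob_dist_def
  proof
    show "\<forall>s\<in>sections Os X. 0 \<le> eX s"
      unfolding eX_def using fa_prob_space.nonneg[OF fa] Eb_in_gen_alg_Sig[OF order_refl X] by blast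
    obtain C where C: "C \<in> M" using X Union_maximal_contexts by blast
    have "sum eX (sections Os X) = (\<Sum>t\<in>sections Os C. marg Os X eX C t)"
      using sum_marg[OF finite_outcomes finite_measurements maximal_context_subset[OF C]] by simp
    also have "\<dots> = sum (e C) (sections Os C)" using marg_eq[OF C] by simp
    also have "\<dots> = 1" using prob_dist_model[OF C] unfolding prob_dist_def by simp
    finally show "sum eX (sections Os X) = 1" .
  qed
  then show ?thesis unfolding probabilistically_contextual_def using marg_eq by blast
qed

lemma empty_measurements_noncontextual:
  assumes "X = {}"
  shows "\<not> probabilistically_contextual X M Os e"
proof -
  have "prob_dist (sections Os X) (\<lambda>_. 1)"
    using assms unfolding prob_dist_def by (simp add: sections_empty)
  moreover have "marg Os X (\<lambda>_. 1) C t = e C t" if C: "C \<in> M" and t: "t \<in> sections Os C" for C t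
  proof -
    have "C = {}" using maximal_context_subset[OF C] assms by blast
    then have "t = Map.empty" "e C Map.empty = 1"
      using t prob_dist_model[OF C] unfolding prob_dist_def by (simp_all add: sections_empty)
    then show ?thesis using assms \<open>C = {}\<close> unfolding marg_def by (simp add: sections_empty)
  qed
  ultimately show ?thesis unfolding probabilistically_contextual_def by blast
qed

lemma probabilistically_contextual_violates_additivity:
  assumes contextual: "probabilistically_contextual X M Os e"
    and ext: "monotonic_extension Y (Sig M Os Y Eb) \<mu> S' \<mu>'"
  shows "\<exists>V. finite V \<and> V \<subseteq> S' \<and> (\<forall>A\<in>V. \<forall>B\<in>V. A \<noteq> B \<longrightarrow> A \<inter> B = {}) \<and> \<Union>V \<in> S' \<and>
    \<mu>' (\<Union>V) \<noteq> (\<Sum>A\<in>V. \<mu>' A)"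
proof (rule ccontr)
  assume no_violation: "\<not> ?thesis"
  have G: "gen_alg Y (Sig M Os Y Eb) \<subseteq> S'" using ext unfolding monotonic_extension_def by auto
  have "\<mu>' (a \<union> b) = \<mu>' a + \<mu>' b"
    if "a \<in> gen_alg Y (Sig M Os Y Eb)" "b \<in> gen_alg Y (Sig M Os Y Eb)" "a \<noteq> b" "a \<inter> b = {}" for a b
  proof -
    have "finite {a, b}" "{a, b} \<subseteq> S'" "\<Union>{a, b} \<in> S'"
      using that G gen_alg.union[of a Y _ b] by auto
    moreover have "\<forall>A\<in>{a, b}. \<forall>B\<in>{a, b}. A \<noteq> B \<longrightarrow> A \<inter> B = {}"
      using that(4) by blast
    ultimately have "\<mu>' (\<Union>{a, b}) = (\<Sum>A\<in>{a, b}. \<mu>' A)"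
      using no_violation by (metis (no_types, lifting))
    then show ?thesis using that(3) by simp
  qed
  moreover have "X \<noteq> {}" using contextual empty_measurements_noncontextual by blast
  ultimately show False using pairwise_additive_extension_noncontextual[OF _ ext] contextual by blast
qed

end

theorem theorem1:
  fixes X :: "'x set" and M :: "'x set set" and Os :: "'o set"
    and e :: "'x set \<Rightarrow> ('x \<rightharpoonup> 'o) \<Rightarrow> real"
    and Y :: "'y set" and Eb :: "('x \<rightharpoonup> 'o) \<Rightarrow> 'y set" and \<mu> :: "'y set \<Rightarrow> real"
  assumes "empirical_scenario X M Os"
    and "empirical_model X M Os e"
    and "wps_rep X M Os e Y Eb \<mu>"
  shows "(strongly_contextual X M Os e \<longrightarrow>
            (\<exists>V. finite V \<and> V \<subseteq> Sig M Os Y Eb \<and> \<Union>V \<in> Sig M Os Y Eb \<and> defect \<mu> V = 1))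
       \<and> (logically_contextual X M Os e \<longrightarrow>
            (\<exists>V. finite V \<and> V \<subseteq> Sig M Os Y Eb \<and> \<Union>V \<in> Sig M Os Y Eb \<and> defect \<mu> V > 0))
       \<and> (probabilistically_contextual X M Os e \<longrightarrow>
            (\<forall>\<Sigma>' \<mu>'. monotonic_extension Y (Sig M Os Y Eb) \<mu> \<Sigma>' \<mu>' \<longrightarrow>
               (\<exists>V. finite V \<and> V \<subseteq> \<Sigma>' \<and> (\<forall>A\<in>V. \<forall>B\<in>V. A \<noteq> B \<longrightarrow> A \<inter> B = {}) \<and> \<Union>V \<in> \<Sigma>' \<and>
                    \<mu>' (\<Union>V) \<noteq> (\<Sum>A\<in>V. \<mu>' A))))"
proof -
  interpret wps_representation X M Os e Y Eb \<mu>
    using assms by unfold_locales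
  show ?thesis
    using strongly_contextual_defect_eq_1 logically_contextual_defect_pos
      probabilistically_contextual_violates_additivity by blast
qed

end
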